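(* Let $\mathcal{F}(X)\subseteq\Psi$ with admissible topology $\Delta$. If $\mathbb{F}$ is commutative and there is a base $\beta$ for the topology of $X$ with $U^+=\{A\in\Psi:A\subseteq U\}\in\Delta$ for every $U\in\beta$, then $(X,\mathbb{F})$ is weakly mixing if and only if $(\Psi,\overline{\mathbb{F}})$ is weakly mixing.
   Context: $(X,d)$ compact metric, $\mathbb{F}=(f_n)$ continuous self-maps with $f_n\circ f_m=f_m\circ f_n$ for all $n,m$; $\omega_n=f_n\circ\cdots\circ f_1$. Weakly mixing: for non-empty open $U_1,U_2,V_1,V_2$ there is $n$ with $\omega_n(U_i)\cap V_i\neq\emptyset$, $i=1,2$. $\mathcal{F}(X)$: non-empty finite subsets; $\Psi\subseteq\mathcal{K}(X)$ invariant under all $\omega_k$; induced system $\overline{\omega}_k(A)=\omega_k(A)$, notions defined analogously on $(\Psi,\Delta)$. Admissible topology: hit-and-miss or hit-and-far-miss type with $x\mapsto\{x\}$ continuous; induced maps continuous. *)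

theory Defs
  imports "HOL-Analysis.Analysis"
begin

text \<open>Non-autonomous system: f 1, f 2, ... ; omega f n = f n o ... o f 1, omega f 0 = id.\<close>
fun omega :: "(nat \<Rightarrow> 'b \<Rightarrow> 'b) \<Rightarrow> nat \<Rightarrow> 'b \<Rightarrow> 'b" where
  "omega f 0 = id"
| "omega f (Suc n) = f (Suc n) \<circ> omega f n"

definition weakly_mixing :: "'b topology \<Rightarrow> (nat \<Rightarrow> 'b \<Rightarrow> 'b) \<Rightarrow> bool" where
  "weakly_mixing T f \<longleftrightarrow>
     (\<forall>U1 U2 V1 V2. openin T U1 \<and> openin T U2 \<and> openin T V1 \<and> openin T V2 \<and>
        U1 \<noteq> {} \<and> U2 \<noteq> {} \<and> V1 \<noteq> {} \<and> V2 \<noteq> {} \<longrightarrow>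
        (\<exists>n\<ge>1. omega f n ` U1 \<inter> V1 \<noteq> {} \<and> omega f n ` U2 \<inter> V2 \<noteq> {}))"

definition induced :: "(nat \<Rightarrow> 'a \<Rightarrow> 'a) \<Rightarrow> nat \<Rightarrow> 'a set \<Rightarrow> 'a set" where
  "induced f n A = f n ` A"

definition hit_set :: "'a set set \<Rightarrow> 'a set \<Rightarrow> 'a set set" where
  "hit_set \<Psi> U = {A \<in> \<Psi>. A \<inter> U \<noteq> {}}"

definition miss_set :: "'a set set \<Rightarrow> 'a set \<Rightarrow> 'a set set" where
  "miss_set \<Psi> B = {A \<in> \<Psi>. A \<inter> B = {}}"

definition far_miss_set :: "'a set set \<Rightarrow> 'a::metric_space set \<Rightarrow> 'a set set" where
  "far_miss_set \<Psi> B = {A \<in> \<Psi>. \<exists>e>0. \<forall>a\<in>A. \<forall>b\<in>B. e \<le> dist a b}"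

definition upper_set :: "'a set set \<Rightarrow> 'a set \<Rightarrow> 'a set set" where
  "upper_set \<Psi> U = {A \<in> \<Psi>. A \<subseteq> U}"

definition admissible ::
  "(nat \<Rightarrow> 'a::metric_space \<Rightarrow> 'a) \<Rightarrow> 'a set set \<Rightarrow> 'a set topology \<Rightarrow> bool" where
  "admissible f \<Psi> \<Delta> \<longleftrightarrow>
     (\<exists>\<B>. (\<forall>B\<in>\<B>. closed B) \<and>
        (\<Delta> = topology_generated_by
               ({hit_set \<Psi> U | U. open U} \<union> {miss_set \<Psi> B | B. B \<in> \<B>})
         \<or> \<Delta> = topology_generated_by
               ({hit_set \<Psi> U | U. open U} \<union> {far_miss_set \<Psi> B | B. B \<in> \<B>}))) \<and>
     continuous_map euclidean \<Delta> (\<lambda>x. {x}) \<and>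
     (\<forall>k\<ge>1. continuous_map \<Delta> \<Delta> (omega (induced f) k))"

end

theory Submission
  imports Defs
begin

text \<open>For the forward implication, every open set W of an admissible hyperspace topology is open
  in the Vietoris sense as far as finite sets are concerned: around each member A it contains all
  finite sets lying in an open Q \<supseteq> A and meeting finitely many open sets that meet A. For a
  commuting weakly mixing system, every finite collection of pairs of non-empty open sets can be
  mixed at one common time n, so one may choose finite sets F1, F2 whose images under
  the n-th iterate land in the prescribed Vietoris neighbourhoods. For the converse, a non-empty
  open U contains a basic set B, whose upper set is non-empty and open in the hyperspace; mixing
  of upper sets is inherited by their points.\<close>

lemma omega_induced: "omega (induced f) n A = omega f n ` A"
  by (induction n arbitrary: A) (auto simp: induced_def image_comp)

lemma continuous_on_omega:
  assumes "\<forall>n\<ge>1. continuous_on UNIV (f n)"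
  shows "continuous_on UNIV (omega f k)"
proof (induction k)
  case (Suc k)
  have "continuous_on UNIV (f (Suc k))"
    using assms by simp
  then have "continuous_on (range (omega f k)) (f (Suc k))"
    by (rule continuous_on_subset) simp
  then show ?case
    using continuous_on_compose[OF Suc] by simp
qed simp

lemma comp_omega_commute:
  assumes "\<forall>n\<ge>1. \<forall>m\<ge>1. f n \<circ> f m = f m \<circ> f n" "m \<ge> 1"
  shows "f m \<circ> omega f k = omega f k \<circ> f m"
proof (induction k)
  case (Suc k)
  have swap: "f m \<circ> f (Suc k) = f (Suc k) \<circ> f m"
    using assms by simp
  have "f m \<circ> omega f (Suc k) = (f m \<circ> f (Suc k)) \<circ> omega f k"
    by (simp only: omega.simps comp_assoc)
  also have "\<dots> = f (Suc k) \<circ> (f m \<circ> omega f k)"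
    by (simp only: swap comp_assoc)
  also have "\<dots> = f (Suc k) \<circ> (omega f k \<circ> f m)"
    by (simp only: Suc.IH)
  also have "\<dots> = omega f (Suc k) \<circ> f m"
    by (simp only: omega.simps comp_assoc)
  finally show ?case .
qed simp

lemma omega_commute:
  assumes "\<forall>n\<ge>1. \<forall>m\<ge>1. f n \<circ> f m = f m \<circ> f n"
  shows "omega f n (omega f k x) = omega f k (omega f n x)"
proof (induction n arbitrary: x)
  case (Suc n)
  have "omega f (Suc n) (omega f k x) = f (Suc n) (omega f k (omega f n x))"
    by (simp add: Suc.IH)
  also have "\<dots> = omega f k (f (Suc n) (omega f n x))"
  proof -
    have "f (Suc n) \<circ> omega f k = omega f k \<circ> f (Suc n)"
      by (rule comp_omega_commute[OF assms]) simp
    from fun_cong[OF this, of "omega f n x"] show ?thesis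
      by simp
  qed
  finally show ?case
    by simp
qed simp

subsection \<open>Weak mixing of finitely many pairs\<close>

lemma weakly_mixingD:
  assumes "weakly_mixing T f" "openin T U1" "openin T U2" "openin T V1" "openin T V2"
    "U1 \<noteq> {}" "U2 \<noteq> {}" "V1 \<noteq> {}" "V2 \<noteq> {}"
  shows "\<exists>n\<ge>1. omega f n ` U1 \<inter> V1 \<noteq> {} \<and> omega f n ` U2 \<inter> V2 \<noteq> {}"
  using assms unfolding weakly_mixing_def by blast

lemma weakly_mixing_euclideanD:
  assumes "weakly_mixing euclidean f" "open U1" "open U2" "open V1" "open V2"
    "U1 \<noteq> {}" "U2 \<noteq> {}" "V1 \<noteq> {}" "V2 \<noteq> {}"
  shows "\<exists>n\<ge>1. omega f n ` U1 \<inter> V1 \<noteq> {} \<and> omega f n ` U2 \<inter> V2 \<noteq> {}"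
  using assms(2-5) by (intro weakly_mixingD[OF assms(1)]) (simp_all add: assms(6-9) flip: open_openin)

definition mixing_dominates :: "(nat \<Rightarrow> 'a \<Rightarrow> 'a) \<Rightarrow> 'a set \<Rightarrow> 'a set \<Rightarrow> ('a set \<times> 'a set) set \<Rightarrow> bool" where
  "mixing_dominates f U V P \<longleftrightarrow>
     (\<forall>n. omega f n ` U \<inter> V \<noteq> {} \<longrightarrow> (\<forall>(A, B)\<in>P. omega f n ` A \<inter> B \<noteq> {}))"

lemma mixing_dominatesI:
  "(\<And>n A B. omega f n ` U \<inter> V \<noteq> {} \<Longrightarrow> (A, B) \<in> P \<Longrightarrow> omega f n ` A \<inter> B \<noteq> {}) \<Longrightarrow>
    mixing_dominates f U V P"
  unfolding mixing_dominates_def by blast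

lemma mixing_dominatesD:
  "mixing_dominates f U V P \<Longrightarrow> omega f n ` U \<inter> V \<noteq> {} \<Longrightarrow> (A, B) \<in> P \<Longrightarrow>
    omega f n ` A \<inter> B \<noteq> {}"
  unfolding mixing_dominates_def by blast

lemma weakly_mixing_dominating_insert:
  fixes f :: "nat \<Rightarrow> 'a::topological_space \<Rightarrow> 'a"
  assumes wm: "weakly_mixing euclidean f"
    and cont: "\<forall>n\<ge>1. continuous_on UNIV (f n)"
    and comm: "\<forall>n\<ge>1. \<forall>m\<ge>1. f n \<circ> f m = f m \<circ> f n"
    and opens: "open U" "open V" "open U'" "open V'"
    and nonempty: "U \<noteq> {}" "V \<noteq> {}" "U' \<noteq> {}" "V' \<noteq> {}"
    and dominates: "mixing_dominates f U V P"
  shows "\<exists>U'' V''. open U'' \<and> open V'' \<and> U'' \<noteq> {} \<and> V'' \<noteq> {} \<and>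
    mixing_dominates f U'' V'' (insert (U', V') P)"
proof -
  obtain k where k: "omega f k ` U \<inter> U' \<noteq> {}" "omega f k ` V \<inter> V' \<noteq> {}"
    using weakly_mixing_euclideanD[OF wm opens nonempty] by blast
  have cont_k: "continuous_on UNIV (omega f k)"
    using continuous_on_omega[OF cont] .
  define U'' where "U'' = U \<inter> omega f k -` U'"
  define V'' where "V'' = V \<inter> omega f k -` V'"
  have "open U''" "open V''"
    using cont_k opens by (simp_all add: U''_def V''_def open_Int open_vimage)
  moreover have "U'' \<noteq> {}" "V'' \<noteq> {}"
    using k by (auto simp: U''_def V''_def)
  moreover have "mixing_dominates f U'' V'' (insert (U', V') P)"
  proof (rule mixing_dominatesI)
    fix n A B
    assume "omega f n ` U'' \<inter> V'' \<noteq> {}" and AB: "(A, B) \<in> insert (U', V') P"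
    then obtain x where "x \<in> U''" "omega f n x \<in> V''"
      by blast
    then have x: "x \<in> U" "omega f k x \<in> U'" "omega f n x \<in> V" "omega f k (omega f n x) \<in> V'"
      by (simp_all add: U''_def V''_def)
    \<comment> \<open>by commutativity, \<open>omega f k x\<close> is a point of U' whose n-th iterate lies in V'\<close>
    then have "omega f n (omega f k x) \<in> V'"
      by (simp add: omega_commute[OF comm])
    with x(2) have "omega f n ` U' \<inter> V' \<noteq> {}"
      by blast
    moreover have "omega f n ` U \<inter> V \<noteq> {}"
      using x(1,3) by blast
    ultimately show "omega f n ` A \<inter> B \<noteq> {}"
      using AB mixing_dominatesD[OF dominates] by blast
  qed
  ultimately show ?thesis
    by (intro exI[of _ U''] exI[of _ V''] conjI)
qed

lemma weakly_mixing_finite_pairs: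
  fixes f :: "nat \<Rightarrow> 'a::topological_space \<Rightarrow> 'a"
  assumes wm: "weakly_mixing euclidean f"
    and cont: "\<forall>n\<ge>1. continuous_on UNIV (f n)"
    and comm: "\<forall>n\<ge>1. \<forall>m\<ge>1. f n \<circ> f m = f m \<circ> f n"
    and "finite P" "\<forall>(U, V)\<in>P. open U \<and> open V \<and> U \<noteq> {} \<and> V \<noteq> {}"
  shows "\<exists>n\<ge>1. \<forall>(U, V)\<in>P. omega f n ` U \<inter> V \<noteq> {}"
proof -
  have "\<exists>U V. open U \<and> open V \<and> U \<noteq> {} \<and> V \<noteq> {} \<and> mixing_dominates f U V P"
    using assms(4,5)
  proof (induction P rule: finite_induct)
    case empty
    have "mixing_dominates f UNIV UNIV {}"
      by (simp add: mixing_dominates_def)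
    then show ?case
      by (intro exI[of _ UNIV]) simp
  next
    case (insert p P)
    obtain U' V' where p: "p = (U', V')"
      by fastforce
    have p_open: "open U'" "open V'" "U' \<noteq> {}" "V' \<noteq> {}"
      using insert.prems by (simp_all add: p)
    obtain U V where "open U" "open V" "U \<noteq> {}" "V \<noteq> {}" "mixing_dominates f U V P"
      using insert.IH insert.prems by auto
    then show ?case
      unfolding p using weakly_mixing_dominating_insert[OF wm cont comm _ _ p_open(1,2) _ _ p_open(3,4)]
      by blast
  qed
  then obtain U V where UV: "open U" "open V" "U \<noteq> {}" "V \<noteq> {}" "mixing_dominates f U V P"
    by blast
  obtain n where "n \<ge> 1" and hit: "omega f n ` U \<inter> V \<noteq> {}"
    using weakly_mixing_euclideanD[OF wm UV(1,1,2,2,3,3,4,4)] by blast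
  then show ?thesis
    using mixing_dominatesD[OF UV(5) hit] by blast
qed

subsection \<open>Finite members of Vietoris neighbourhoods\<close>

text \<open>The finite members of the Vietoris basic open set \<open>\<langle>Q; \<U>\<rangle>\<close>.\<close>

definition vietoris_box :: "'a set \<Rightarrow> 'a set set \<Rightarrow> 'a set set" where
  "vietoris_box Q \<U> = {F. finite F \<and> F \<noteq> {} \<and> F \<subseteq> Q \<and> (\<forall>U\<in>\<U>. F \<inter> U \<noteq> {})}"

definition finite_vietoris_open :: "'a::topological_space set set \<Rightarrow> bool" where
  "finite_vietoris_open W \<longleftrightarrow>
     (\<forall>A\<in>W. \<exists>Q \<U>. open Q \<and> A \<subseteq> Q \<and> finite \<U> \<and> (\<forall>U\<in>\<U>. open U \<and> A \<inter> U \<noteq> {}) \<and>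
        vietoris_box Q \<U> \<subseteq> W)"

lemma finite_vietoris_openI:
  assumes "\<And>A. A \<in> W \<Longrightarrow> \<exists>Q \<U>. open Q \<and> A \<subseteq> Q \<and> finite \<U> \<and>
    (\<forall>U\<in>\<U>. open U \<and> A \<inter> U \<noteq> {}) \<and> vietoris_box Q \<U> \<subseteq> W"
  shows "finite_vietoris_open W"
  using assms unfolding finite_vietoris_open_def by blast

lemma finite_vietoris_openD:
  assumes "finite_vietoris_open W" "A \<in> W"
  shows "\<exists>Q \<U>. open Q \<and> A \<subseteq> Q \<and> finite \<U> \<and>
    (\<forall>U\<in>\<U>. open U \<and> A \<inter> U \<noteq> {}) \<and> vietoris_box Q \<U> \<subseteq> W"
  using assms unfolding finite_vietoris_open_def by blast

lemma vietoris_box_Int: "vietoris_box (Q \<inter> Q') (\<U> \<union> \<U>') = vietoris_box Q \<U> \<inter> vietoris_box Q' \<U>'"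
  by (auto simp: vietoris_box_def)

lemma finite_vietoris_open_Int:
  assumes "finite_vietoris_open W" "finite_vietoris_open W'"
  shows "finite_vietoris_open (W \<inter> W')"
proof (rule finite_vietoris_openI)
  fix A
  assume "A \<in> W \<inter> W'"
  then have "A \<in> W" "A \<in> W'"
    by simp_all
  obtain Q \<U> where
    "open Q" "A \<subseteq> Q" "finite \<U>" "\<forall>U\<in>\<U>. open U \<and> A \<inter> U \<noteq> {}" "vietoris_box Q \<U> \<subseteq> W"
    using finite_vietoris_openD[OF assms(1) \<open>A \<in> W\<close>] by blast
  moreover obtain Q' \<U>' where
    "open Q'" "A \<subseteq> Q'" "finite \<U>'" "\<forall>U\<in>\<U>'. open U \<and> A \<inter> U \<noteq> {}" "vietoris_box Q' \<U>' \<subseteq> W'"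
    using finite_vietoris_openD[OF assms(2) \<open>A \<in> W'\<close>] by blast
  ultimately show "\<exists>Q \<U>. open Q \<and> A \<subseteq> Q \<and> finite \<U> \<and> (\<forall>U\<in>\<U>. open U \<and> A \<inter> U \<noteq> {}) \<and>
      vietoris_box Q \<U> \<subseteq> W \<inter> W'"
    by (intro exI[of _ "Q \<inter> Q'"] exI[of _ "\<U> \<union> \<U>'"]) (auto simp: vietoris_box_Int)
qed

lemma finite_vietoris_open_Union:
  assumes "\<forall>W\<in>\<W>. finite_vietoris_open W"
  shows "finite_vietoris_open (\<Union>\<W>)"
proof (rule finite_vietoris_openI)
  fix A
  assume "A \<in> \<Union>\<W>"
  then obtain W where "W \<in> \<W>" "A \<in> W"
    by blast
  have "finite_vietoris_open W"
    using assms \<open>W \<in> \<W>\<close> by blast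
  then obtain Q \<U> where "open Q" "A \<subseteq> Q" "finite \<U>" "\<forall>U\<in>\<U>. open U \<and> A \<inter> U \<noteq> {}"
    "vietoris_box Q \<U> \<subseteq> W"
    using finite_vietoris_openD[OF _ \<open>A \<in> W\<close>] by blast
  moreover have "W \<subseteq> \<Union>\<W>"
    using \<open>W \<in> \<W>\<close> by blast
  ultimately show "\<exists>Q \<U>. open Q \<and> A \<subseteq> Q \<and> finite \<U> \<and> (\<forall>U\<in>\<U>. open U \<and> A \<inter> U \<noteq> {}) \<and>
      vietoris_box Q \<U> \<subseteq> \<Union>\<W>"
    by (intro exI[of _ Q] exI[of _ \<U>]) auto
qed

lemma finite_vietoris_open_generated:
  assumes "generate_topology_on \<S> W" "\<forall>S\<in>\<S>. finite_vietoris_open S"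
  shows "finite_vietoris_open W"
  using assms
proof (induction rule: generate_topology_on.induct)
  case Empty
  show ?case
    by (simp add: finite_vietoris_open_def)
next
  case (Int a b)
  then show ?case
    by (simp add: finite_vietoris_open_Int)
next
  case (UN K)
  then show ?case
    by (simp add: finite_vietoris_open_Union)
qed simp

lemma finite_vietoris_open_hit_set:
  assumes "open U" "{A. finite A \<and> A \<noteq> {}} \<subseteq> \<Psi>"
  shows "finite_vietoris_open (hit_set \<Psi> U)"
proof (rule finite_vietoris_openI)
  fix A
  assume "A \<in> hit_set \<Psi> U"
  then have "A \<inter> U \<noteq> {}" "vietoris_box UNIV {U} \<subseteq> hit_set \<Psi> U"
    using assms(2) by (auto simp: hit_set_def vietoris_box_def)
  then show "\<exists>Q \<U>. open Q \<and> A \<subseteq> Q \<and> finite \<U> \<and> (\<forall>U\<in>\<U>. open U \<and> A \<inter> U \<noteq> {}) \<and>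
      vietoris_box Q \<U> \<subseteq> hit_set \<Psi> U"
    using assms(1) by (intro exI[of _ UNIV] exI[of _ "{U}"]) auto
qed

lemma finite_vietoris_open_missing:
  assumes "closed B" "\<forall>A\<in>W. A \<inter> B = {}" "\<forall>F\<in>vietoris_box (- B) {}. F \<in> W"
  shows "finite_vietoris_open W"
  using assms unfolding finite_vietoris_open_def
  by (intro ballI exI[of _ "- B"] exI[of _ "{}"]) auto

lemma finite_vietoris_open_miss_set:
  assumes "closed B" "{A. finite A \<and> A \<noteq> {}} \<subseteq> \<Psi>"
  shows "finite_vietoris_open (miss_set \<Psi> B)"
  using assms by (intro finite_vietoris_open_missing) (auto simp: miss_set_def vietoris_box_def)

lemma finite_set_far_from_closed:
  fixes B :: "'a::metric_space set"
  assumes "closed B" "finite F" "F \<inter> B = {}"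
  shows "\<exists>e>0. \<forall>a\<in>F. \<forall>b\<in>B. e \<le> dist a b"
  using assms(2,3)
proof (induction F rule: finite_induct)
  case (insert x F)
  obtain e where e: "e > 0" "\<forall>a\<in>F. \<forall>b\<in>B. e \<le> dist a b"
    using insert.IH insert.prems by blast
  have "x \<notin> B"
    using insert.prems by blast
  then obtain d where d: "d > 0" "\<forall>b\<in>B. d \<le> dist x b"
    using assms(1) by (metis closed_approachable dist_commute leI)
  show ?case
    using e d by (intro exI[of _ "min d e"]) (auto simp: min_le_iff_disj)
qed (intro exI[of _ 1], simp)

lemma finite_vietoris_open_far_miss_set:
  fixes B :: "'a::metric_space set"
  assumes "closed B" "{A. finite A \<and> A \<noteq> {}} \<subseteq> \<Psi>"
  shows "finite_vietoris_open (far_miss_set \<Psi> B)"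
proof (rule finite_vietoris_open_missing[OF assms(1)])
  show "\<forall>A\<in>far_miss_set \<Psi> B. A \<inter> B = {}"
  proof (intro ballI equals0I)
    fix A a
    assume "A \<in> far_miss_set \<Psi> B" "a \<in> A \<inter> B"
    then obtain e where "e > 0" "e \<le> dist a a"
      unfolding far_miss_set_def by blast
    then show False
      by simp
  qed
  show "\<forall>F\<in>vietoris_box (- B) {}. F \<in> far_miss_set \<Psi> B"
  proof
    fix F
    assume "F \<in> vietoris_box (- B) {}"
    then have "finite F" "F \<noteq> {}" "F \<inter> B = {}"
      by (auto simp: vietoris_box_def)
    then have "F \<in> \<Psi>" "\<exists>e>0. \<forall>a\<in>F. \<forall>b\<in>B. e \<le> dist a b"
      using assms(2) finite_set_far_from_closed[OF assms(1)] by auto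
    then show "F \<in> far_miss_set \<Psi> B"
      by (simp add: far_miss_set_def)
  qed
qed

lemma admissibleE:
  assumes "admissible f \<Psi> \<Delta>"
  obtains \<B> \<M> where "\<forall>B\<in>\<B>. closed B"
    and "\<Delta> = topology_generated_by ({hit_set \<Psi> U | U. open U} \<union> \<M>)"
    and "\<M> = {miss_set \<Psi> B | B. B \<in> \<B>} \<or> \<M> = {far_miss_set \<Psi> B | B. B \<in> \<B>}"
  using assms unfolding admissible_def by blast

lemma admissible_open_finite_vietoris_open:
  assumes "admissible f \<Psi> \<Delta>" "{A. finite A \<and> A \<noteq> {}} \<subseteq> \<Psi>" "openin \<Delta> W"
  shows "finite_vietoris_open W"
proof -
  obtain \<B> \<M> where closed: "\<forall>B\<in>\<B>. closed B"
    and \<Delta>: "\<Delta> = topology_generated_by ({hit_set \<Psi> U | U. open U} \<union> \<M>)"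
    and \<M>: "\<M> = {miss_set \<Psi> B | B. B \<in> \<B>} \<or> \<M> = {far_miss_set \<Psi> B | B. B \<in> \<B>}"
    using assms(1) by (rule admissibleE)
  have "\<forall>S\<in>{hit_set \<Psi> U | U. open U}. finite_vietoris_open S"
    using finite_vietoris_open_hit_set[OF _ assms(2)] by blast
  moreover have "\<forall>S\<in>\<M>. finite_vietoris_open S"
    using \<M> closed finite_vietoris_open_miss_set[OF _ assms(2)]
      finite_vietoris_open_far_miss_set[OF _ assms(2)]
    by (elim disjE) auto
  ultimately have "\<forall>S\<in>{hit_set \<Psi> U | U. open U} \<union> \<M>. finite_vietoris_open S"
    by blast
  moreover have "generate_topology_on ({hit_set \<Psi> U | U. open U} \<union> \<M>) W"
    using assms(3) unfolding \<Delta> by (rule openin_topology_generated_by)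
  ultimately show ?thesis
    using finite_vietoris_open_generated by blast
qed

lemma admissible_open_subset:
  assumes "admissible f \<Psi> \<Delta>" "openin \<Delta> W"
  shows "W \<subseteq> \<Psi>"
proof -
  obtain \<B> \<M> where \<Delta>: "\<Delta> = topology_generated_by ({hit_set \<Psi> U | U. open U} \<union> \<M>)"
    and \<M>: "\<M> = {miss_set \<Psi> B | B. B \<in> \<B>} \<or> \<M> = {far_miss_set \<Psi> B | B. B \<in> \<B>}"
    using assms(1) by (rule admissibleE)
  have "topspace \<Delta> \<subseteq> \<Psi>"
    using \<M> unfolding \<Delta> topology_generated_by_topspace
    by (elim disjE) (auto simp: hit_set_def miss_set_def far_miss_set_def)
  then show ?thesis
    using openin_subset[OF assms(2)] by blast
qed

subsection \<open>Mixing of Vietoris neighbourhoods by finite sets\<close>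

definition open_box :: "'a::topological_space set \<Rightarrow> 'a set set \<Rightarrow> bool" where
  "open_box Q \<U> \<longleftrightarrow> open Q \<and> Q \<noteq> {} \<and> finite \<U> \<and> (\<forall>U\<in>\<U>. open U \<and> U \<inter> Q \<noteq> {})"

lemma finite_vietoris_open_contains_box:
  assumes "finite_vietoris_open W" "A \<in> W" "A \<noteq> {}"
  shows "\<exists>Q \<U>. open_box Q \<U> \<and> vietoris_box Q \<U> \<subseteq> W"
proof -
  obtain Q \<U> where "open Q" "A \<subseteq> Q" "finite \<U>" "\<forall>U\<in>\<U>. open U \<and> A \<inter> U \<noteq> {}"
    "vietoris_box Q \<U> \<subseteq> W"
    using finite_vietoris_openD[OF assms(1,2)] by blast
  moreover from this have "open_box Q \<U>"
    using \<open>A \<noteq> {}\<close> unfolding open_box_def by blast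
  ultimately show ?thesis
    by blast
qed

text \<open>The pairs of open sets that have to be mixed simultaneously so that some finite set in
  the box \<open>\<langle>Q; \<U>\<rangle>\<close> is mapped into the box \<open>\<langle>Q'; \<V>\<rangle>\<close>: one point for each member of
  \<open>\<U>\<close> and of \<open>\<V>\<close>, and one more to make the set non-empty.\<close>

definition box_pairs :: "'a set \<Rightarrow> 'a set set \<Rightarrow> 'b set \<Rightarrow> 'b set set \<Rightarrow> ('a set \<times> 'b set) set" where
  "box_pairs Q \<U> Q' \<V> = insert (Q, Q') ((\<lambda>U. (U \<inter> Q, Q')) ` \<U> \<union> (\<lambda>V. (Q, V \<inter> Q')) ` \<V>)"

lemma finite_box_pairs: "finite \<U> \<Longrightarrow> finite \<V> \<Longrightarrow> finite (box_pairs Q \<U> Q' \<V>)"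
  by (simp add: box_pairs_def)

lemma box_pairs_subset: "p \<in> box_pairs Q \<U> Q' \<V> \<Longrightarrow> fst p \<subseteq> Q \<and> snd p \<subseteq> Q'"
  by (auto simp: box_pairs_def)

lemma box_pairs_open_nonempty:
  assumes "open_box Q \<U>" "open_box Q' \<V>"
  shows "\<forall>(U, V)\<in>box_pairs Q \<U> Q' \<V>. open U \<and> open V \<and> U \<noteq> {} \<and> V \<noteq> {}"
  using assms by (auto simp: box_pairs_def open_box_def)

lemma vietoris_box_image_meets:
  fixes g :: "'a \<Rightarrow> 'b"
  assumes "finite \<U>" "finite \<V>" and meets: "\<forall>(U, V)\<in>box_pairs Q \<U> Q' \<V>. g ` U \<inter> V \<noteq> {}"
  shows "\<exists>F\<in>vietoris_box Q \<U>. g ` F \<in> vietoris_box Q' \<V>"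
proof -
  have "\<exists>y. y \<in> fst p \<and> g y \<in> snd p" if "p \<in> box_pairs Q \<U> Q' \<V>" for p
    using meets that by (cases p) auto
  then obtain x where x: "\<And>p. p \<in> box_pairs Q \<U> Q' \<V> \<Longrightarrow> x p \<in> fst p \<and> g (x p) \<in> snd p"
    by metis
  define F where "F = x ` box_pairs Q \<U> Q' \<V>"
  have "finite F" "F \<noteq> {}"
    using assms(1,2) by (simp_all add: F_def finite_box_pairs box_pairs_def)
  moreover have "F \<subseteq> Q" "g ` F \<subseteq> Q'"
    using x box_pairs_subset unfolding F_def by fastforce+
  moreover have "F \<inter> U \<noteq> {}" if "U \<in> \<U>" for U
  proof -
    have "(U \<inter> Q, Q') \<in> box_pairs Q \<U> Q' \<V>"
      using that by (simp add: box_pairs_def)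
    from x[OF this] show ?thesis
      unfolding F_def using \<open>(U \<inter> Q, Q') \<in> box_pairs Q \<U> Q' \<V>\<close> by auto
  qed
  moreover have "g ` F \<inter> V \<noteq> {}" if "V \<in> \<V>" for V
  proof -
    have "(Q, V \<inter> Q') \<in> box_pairs Q \<U> Q' \<V>"
      using that by (simp add: box_pairs_def)
    from x[OF this] show ?thesis
      unfolding F_def using \<open>(Q, V \<inter> Q') \<in> box_pairs Q \<U> Q' \<V>\<close> by auto
  qed
  ultimately have "F \<in> vietoris_box Q \<U>" "g ` F \<in> vietoris_box Q' \<V>"
    by (auto simp: vietoris_box_def)
  then show ?thesis
    by blast
qed

lemma finite_sets_mix_boxes:
  fixes f :: "nat \<Rightarrow> 'a::topological_space \<Rightarrow> 'a"
  assumes mix: "\<And>P. finite P \<Longrightarrow> \<forall>(U, V)\<in>P. open U \<and> open V \<and> U \<noteq> {} \<and> V \<noteq> {} \<Longrightarrow>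
      \<exists>n\<ge>1. \<forall>(U, V)\<in>P. omega f n ` U \<inter> V \<noteq> {}"
    and boxes: "open_box Q1 \<U>1" "open_box Q2 \<U>2" "open_box Q3 \<U>3" "open_box Q4 \<U>4"
  shows "\<exists>n\<ge>1. \<exists>F1 F2. F1 \<in> vietoris_box Q1 \<U>1 \<and> omega f n ` F1 \<in> vietoris_box Q3 \<U>3 \<and>
    F2 \<in> vietoris_box Q2 \<U>2 \<and> omega f n ` F2 \<in> vietoris_box Q4 \<U>4"
proof -
  have finite: "finite \<U>1" "finite \<U>2" "finite \<U>3" "finite \<U>4"
    using boxes by (simp_all add: open_box_def)
  define P where "P = box_pairs Q1 \<U>1 Q3 \<U>3 \<union> box_pairs Q2 \<U>2 Q4 \<U>4"
  have "finite P"
    using finite by (simp add: P_def finite_box_pairs)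
  moreover have "\<forall>(U, V)\<in>P. open U \<and> open V \<and> U \<noteq> {} \<and> V \<noteq> {}"
    unfolding P_def ball_Un
    using box_pairs_open_nonempty[OF boxes(1,3)] box_pairs_open_nonempty[OF boxes(2,4)] ..
  ultimately have "\<exists>n\<ge>1. \<forall>(U, V)\<in>P. omega f n ` U \<inter> V \<noteq> {}"
    by (rule mix)
  then obtain n where "n \<ge> 1"
    and meets: "\<forall>(U, V)\<in>box_pairs Q1 \<U>1 Q3 \<U>3. omega f n ` U \<inter> V \<noteq> {}"
      "\<forall>(U, V)\<in>box_pairs Q2 \<U>2 Q4 \<U>4. omega f n ` U \<inter> V \<noteq> {}"
    unfolding P_def ball_Un by blast
  then show ?thesis
    using vietoris_box_image_meets[OF finite(1,3) meets(1)]
      vietoris_box_image_meets[OF finite(2,4) meets(2)] by blast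
qed

lemma weakly_mixing_induced_if_finite_vietoris_open:
  fixes f :: "nat \<Rightarrow> 'a::topological_space \<Rightarrow> 'a"
  assumes mix: "\<And>P. finite P \<Longrightarrow> \<forall>(U, V)\<in>P. open U \<and> open V \<and> U \<noteq> {} \<and> V \<noteq> {} \<Longrightarrow>
      \<exists>n\<ge>1. \<forall>(U, V)\<in>P. omega f n ` U \<inter> V \<noteq> {}"
    and opens: "\<And>W. openin T W \<Longrightarrow> finite_vietoris_open W \<and> {} \<notin> W"
  shows "weakly_mixing T (induced f)"
  unfolding weakly_mixing_def
proof (intro allI impI)
  have box: "\<exists>Q \<U>. open_box Q \<U> \<and> vietoris_box Q \<U> \<subseteq> W" if "openin T W" "W \<noteq> {}" for W
  proof -
    obtain A where "A \<in> W"
      using \<open>W \<noteq> {}\<close> by blast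
    moreover have "finite_vietoris_open W" "A \<noteq> {}"
      using opens[OF \<open>openin T W\<close>] \<open>A \<in> W\<close> by auto
    ultimately show ?thesis
      using finite_vietoris_open_contains_box by blast
  qed
  fix W1 W2 W3 W4
  assume "openin T W1 \<and> openin T W2 \<and> openin T W3 \<and> openin T W4 \<and>
    W1 \<noteq> {} \<and> W2 \<noteq> {} \<and> W3 \<noteq> {} \<and> W4 \<noteq> {}"
  then have "openin T W1" "openin T W2" "openin T W3" "openin T W4"
    "W1 \<noteq> {}" "W2 \<noteq> {}" "W3 \<noteq> {}" "W4 \<noteq> {}"
    by simp_all
  then obtain Q1 \<U>1 Q2 \<U>2 Q3 \<U>3 Q4 \<U>4 where
    boxes: "open_box Q1 \<U>1" "open_box Q2 \<U>2" "open_box Q3 \<U>3" "open_box Q4 \<U>4"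
    and inside: "vietoris_box Q1 \<U>1 \<subseteq> W1" "vietoris_box Q2 \<U>2 \<subseteq> W2"
      "vietoris_box Q3 \<U>3 \<subseteq> W3" "vietoris_box Q4 \<U>4 \<subseteq> W4"
    using box by (metis (no_types))
  obtain n F1 F2 where "n \<ge> 1"
    "F1 \<in> vietoris_box Q1 \<U>1" "omega f n ` F1 \<in> vietoris_box Q3 \<U>3"
    "F2 \<in> vietoris_box Q2 \<U>2" "omega f n ` F2 \<in> vietoris_box Q4 \<U>4"
    using finite_sets_mix_boxes[OF mix boxes] by blast
  moreover from this have
    "omega (induced f) n F1 \<in> omega (induced f) n ` W1 \<inter> W3"
    "omega (induced f) n F2 \<in> omega (induced f) n ` W2 \<inter> W4"
    using inside by (auto simp: omega_induced)
  ultimately show "\<exists>n\<ge>1. omega (induced f) n ` W1 \<inter> W3 \<noteq> {} \<and> omega (induced f) n ` W2 \<inter> W4 \<noteq> {}"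
    by blast
qed

subsection \<open>Upper sets\<close>

lemma omega_meets_if_upper_sets_meet:
  assumes "omega (induced f) n ` upper_set \<Psi> B \<inter> upper_set \<Psi> C \<noteq> {}" "{} \<notin> \<Psi>"
  shows "omega f n ` B \<inter> C \<noteq> {}"
proof -
  obtain A where "A \<in> \<Psi>" "A \<subseteq> B" "omega f n ` A \<subseteq> C"
    using assms(1) by (auto simp: upper_set_def omega_induced)
  moreover have "A \<noteq> {}"
    using assms(2) \<open>A \<in> \<Psi>\<close> by auto
  ultimately show ?thesis
    by blast
qed

lemma open_contains_open_upper_set:
  assumes basis: "topological_basis \<beta>" "\<forall>B\<in>\<beta>. openin T (upper_set \<Psi> B)"
    and singletons: "\<forall>x. {x} \<in> \<Psi>" and "open U" "U \<noteq> {}"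
  shows "\<exists>B. openin T (upper_set \<Psi> B) \<and> upper_set \<Psi> B \<noteq> {} \<and> B \<subseteq> U"
proof -
  obtain x where "x \<in> U"
    using \<open>U \<noteq> {}\<close> by blast
  then obtain B where "B \<in> \<beta>" "x \<in> B" "B \<subseteq> U"
    using topological_basisE[OF basis(1) \<open>open U\<close>] by blast
  moreover from this have "{x} \<in> upper_set \<Psi> B"
    using singletons by (simp add: upper_set_def)
  ultimately show ?thesis
    using basis(2) by blast
qed

lemma weakly_mixing_if_induced:
  fixes f :: "nat \<Rightarrow> 'a::topological_space \<Rightarrow> 'a"
  assumes wm: "weakly_mixing T (induced f)"
    and basis: "topological_basis \<beta>" "\<forall>B\<in>\<beta>. openin T (upper_set \<Psi> B)"
    and singletons: "\<forall>x. {x} \<in> \<Psi>" and nonempty: "{} \<notin> \<Psi>"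
  shows "weakly_mixing euclidean f"
  unfolding weakly_mixing_def
proof (intro allI impI)
  note upper_inside = open_contains_open_upper_set[OF basis singletons]
  have mixes: "omega f n ` U \<inter> V \<noteq> {}"
    if "omega (induced f) n ` upper_set \<Psi> B \<inter> upper_set \<Psi> C \<noteq> {}" "B \<subseteq> U" "C \<subseteq> V"
    for n B C U V
    using omega_meets_if_upper_sets_meet[OF that(1) nonempty] that(2,3) by blast
  fix U1 U2 V1 V2 :: "'a set"
  assume "openin euclidean U1 \<and> openin euclidean U2 \<and> openin euclidean V1 \<and> openin euclidean V2 \<and>
    U1 \<noteq> {} \<and> U2 \<noteq> {} \<and> V1 \<noteq> {} \<and> V2 \<noteq> {}"
  then have U: "open U1" "open U2" "U1 \<noteq> {}" "U2 \<noteq> {}"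
    and V: "open V1" "open V2" "V1 \<noteq> {}" "V2 \<noteq> {}"
    by (simp_all flip: open_openin)
  obtain B1 where B1: "openin T (upper_set \<Psi> B1)" "upper_set \<Psi> B1 \<noteq> {}" "B1 \<subseteq> U1"
    using upper_inside[OF U(1,3)] by blast
  obtain B2 where B2: "openin T (upper_set \<Psi> B2)" "upper_set \<Psi> B2 \<noteq> {}" "B2 \<subseteq> U2"
    using upper_inside[OF U(2,4)] by blast
  obtain C1 where C1: "openin T (upper_set \<Psi> C1)" "upper_set \<Psi> C1 \<noteq> {}" "C1 \<subseteq> V1"
    using upper_inside[OF V(1,3)] by blast
  obtain C2 where C2: "openin T (upper_set \<Psi> C2)" "upper_set \<Psi> C2 \<noteq> {}" "C2 \<subseteq> V2"
    using upper_inside[OF V(2,4)] by blast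
  obtain n where "n \<ge> 1"
    and n: "omega (induced f) n ` upper_set \<Psi> B1 \<inter> upper_set \<Psi> C1 \<noteq> {}"
      "omega (induced f) n ` upper_set \<Psi> B2 \<inter> upper_set \<Psi> C2 \<noteq> {}"
    using weakly_mixingD[OF wm B1(1) B2(1) C1(1) C2(1) B1(2) B2(2) C1(2) C2(2)] by blast
  moreover have "omega f n ` U1 \<inter> V1 \<noteq> {}"
    by (rule mixes[OF n(1) B1(3) C1(3)])
  moreover have "omega f n ` U2 \<inter> V2 \<noteq> {}"
    by (rule mixes[OF n(2) B2(3) C2(3)])
  ultimately show "\<exists>n\<ge>1. omega f n ` U1 \<inter> V1 \<noteq> {} \<and> omega f n ` U2 \<inter> V2 \<noteq> {}"
    by blast
qed

theorem mainTheorem6: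
  fixes f :: "nat \<Rightarrow> 'a::metric_space \<Rightarrow> 'a"
    and \<Psi> :: "'a set set"
    and \<Delta> :: "'a set topology"
  assumes compact_X: "compact (UNIV :: 'a set)"
    and cont: "\<forall>n\<ge>1. continuous_on UNIV (f n)"
    and comm: "\<forall>n\<ge>1. \<forall>m\<ge>1. f n \<circ> f m = f m \<circ> f n"
    and Psi_K: "\<Psi> \<subseteq> {A. A \<noteq> {} \<and> compact A}"
    and Psi_inv: "\<forall>k\<ge>1. \<forall>A\<in>\<Psi>. omega f k ` A \<in> \<Psi>"
    and finite_sub: "{A. finite A \<and> A \<noteq> {}} \<subseteq> \<Psi>"
    and adm: "admissible f \<Psi> \<Delta>"
    and base: "\<exists>\<beta>. topological_basis \<beta> \<and> (\<forall>U\<in>\<beta>. openin \<Delta> (upper_set \<Psi> U))"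
  shows "weakly_mixing euclidean f \<longleftrightarrow> weakly_mixing \<Delta> (induced f)"
proof
  have nonempty: "{} \<notin> \<Psi>"
    using Psi_K by blast
  assume wm: "weakly_mixing euclidean f"
  show "weakly_mixing \<Delta> (induced f)"
  proof (rule weakly_mixing_induced_if_finite_vietoris_open)
    show "\<exists>n\<ge>1. \<forall>(U, V)\<in>P. omega f n ` U \<inter> V \<noteq> {}"
      if "finite P" "\<forall>(U, V)\<in>P. open U \<and> open V \<and> U \<noteq> {} \<and> V \<noteq> {}" for P
      using weakly_mixing_finite_pairs[OF wm cont comm that] .
    show "finite_vietoris_open W \<and> {} \<notin> W" if "openin \<Delta> W" for W
      using admissible_open_finite_vietoris_open[OF adm finite_sub that]
        admissible_open_subset[OF adm that] nonempty by blast
  qed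
next
  assume "weakly_mixing \<Delta> (induced f)"
  moreover obtain \<beta> where "topological_basis \<beta>" "\<forall>B\<in>\<beta>. openin \<Delta> (upper_set \<Psi> B)"
    using base by blast
  moreover have "\<forall>x. {x} \<in> \<Psi>" "{} \<notin> \<Psi>"
    using finite_sub Psi_K by auto
  ultimately show "weakly_mixing euclidean f"
    by (rule weakly_mixing_if_induced)
qed

end
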